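(* For every integer $t\ge 2$ and every $\varepsilon>0$ the following holds for infinitely many $k$. There exist a vertex set $V$ containing a terminal set $K$ with $|K|=k$ and $k=o(|V|)$, and a family $\mathcal G$ of unweighted undirected graphs on vertex set $V$, each with $O(|V|)$ edges, such that any data structure (i.e., any encoding map $f$ from $\mathcal G$ to bit strings together with a decoding procedure that, given only $f(G)$, outputs for every pair $x,x'\in K$ an estimate $\delta(x,x')$) which satisfies either $d_G(x,x')\le \delta(x,x')\le (t-\varepsilon)\,d_G(x,x')$ for all $x,x'\in K$ and all $G\in\mathcal G$, or $d_G(x,x')\le \delta(x,x')\le d_G(x,x')+2t-3$ for all $x,x'\in K$ and all $G\in\mathcal G$, must use $\Omega(k^{1+1/(t-1)})$ bits on some $G\in\mathcal G$.
   Context: $d_G(x,x')$ denotes the shortest-path (hop) distance between $x$ and $x'$ in the unweighted graph $G$. *)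

theory Defs
  imports "HOL-Analysis.Analysis" "HOL-Library.Extended_Real"
begin

definition graph_on :: "'a set \<Rightarrow> 'a set set \<Rightarrow> bool" where
  "graph_on V E \<longleftrightarrow> (\<forall>e\<in>E. \<exists>u v. e = {u, v} \<and> u \<noteq> v \<and> u \<in> V \<and> v \<in> V)"

definition walk :: "'a set set \<Rightarrow> 'a list \<Rightarrow> bool" where
  "walk E xs \<longleftrightarrow> xs \<noteq> [] \<and> (\<forall>i. i + 1 < length xs \<longrightarrow> {xs ! i, xs ! (i + 1)} \<in> E)"

text \<open>Hop distance d_G(x,y); it is \<infinity> if y is not reachable from x.\<close>
definition hop_dist :: "'a set set \<Rightarrow> 'a \<Rightarrow> 'a \<Rightarrow> ereal" where
  "hop_dist E x y = Inf {ereal (real (length xs - 1)) | xs. walk E xs \<and> hd xs = x \<and> last xs = y}"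

end

theory Submission
  imports Defs
begin

text \<open>
  Let \<open>H\<close> be a graph on the \<open>k\<close> terminals with girth greater than \<open>t\<close> and
  \<open>\<Omega>(k^(1 + 1/(t - 1)))\<close> edges. Such a graph exists: in an edge-maximal graph of maximum degree
  \<open>D\<close> and girth greater than \<open>t\<close>, the vertices of degree below \<open>D\<close> are pairwise at distance
  less than \<open>t\<close>, so they fit into a ball of at most \<open>(D + 1)^(t - 1)\<close> vertices and all other
  vertices have degree \<open>D\<close>.

  The family consists of the subdivisions of all subgraphs \<open>G\<close> of \<open>H\<close>. For an edge \<open>{u, v}\<close>
  of \<open>H\<close>, the distance of \<open>u\<close> and \<open>v\<close> in the subdivision of \<open>G\<close> is 2 if the edge is in \<open>G\<close>
  and at least \<open>2t\<close> otherwise, because \<open>u\<close> and \<open>v\<close> are \<open>t\<close> apart in \<open>H - {u, v}\<close>. Neither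
  a stretch below \<open>t\<close> nor an additive error of \<open>2t - 3\<close> bridges this gap, so the code
  determines \<open>G\<close>, and an injective code of the \<open>2^|H|\<close> subgraphs has a word of length
  at least \<open>|H|\<close>. All graphs of the family live on the same \<open>k + k\<^sup>2\<close> vertices, which gives
  \<open>k = o(|V|)\<close> and \<open>O(|V|)\<close> edges.
\<close>

section \<open>Hop distance\<close>

lemma walk_iff_successively: "walk E xs \<longleftrightarrow> xs \<noteq> [] \<and> successively (\<lambda>a b. {a, b} \<in> E) xs"
  by (simp add: walk_def successively_conv_nth)

lemma walk_Cons: "walk E (x # xs) \<longleftrightarrow> xs = [] \<or> {x, hd xs} \<in> E \<and> walk E xs"
  by (auto simp: walk_iff_successively successively_Cons)

lemma walk_snoc: "walk E (xs @ [z]) \<longleftrightarrow> xs = [] \<or> walk E xs \<and> {last xs, z} \<in> E"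
  by (auto simp: walk_iff_successively successively_append_iff)

lemma walk_rev: "walk E (rev xs) \<longleftrightarrow> walk E xs"
  by (simp add: walk_iff_successively insert_commute)

lemma walk_mono: "walk E xs \<Longrightarrow> E \<subseteq> E' \<Longrightarrow> walk E' xs"
  unfolding walk_def by blast

lemma hop_dist_le_walk:
  "walk E xs \<Longrightarrow> hd xs = x \<Longrightarrow> last xs = y \<Longrightarrow> hop_dist E x y \<le> real (length xs - 1)"
  unfolding hop_dist_def by (rule Inf_lower) blast

lemma hop_dist_nonneg: "0 \<le> hop_dist E x y"
  unfolding hop_dist_def by (rule Inf_greatest) auto

lemma hop_dist_self [simp]: "hop_dist E x x = 0"
  using hop_dist_le_walk[of E "[x]"] hop_dist_nonneg[of E x x]
  by (simp add: walk_def zero_ereal_def[symmetric])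

lemma hop_dist_edge: "{x, y} \<in> E \<Longrightarrow> hop_dist E x y \<le> 1"
  using hop_dist_le_walk[of E "[x, y]"] by (simp add: walk_def one_ereal_def[symmetric])

lemma hop_dist_sym_le: "hop_dist E y x \<le> hop_dist E x y"
  unfolding hop_dist_def
proof (rule Inf_superset_mono, clarify)
  fix xs assume "walk E xs" "x = hd xs" "y = last xs"
  then show "\<exists>ys. ereal (real (length xs - 1)) = ereal (real (length ys - 1)) \<and>
      walk E ys \<and> hd ys = last xs \<and> last ys = hd xs"
    by (intro exI[of _ "rev xs"]) (simp add: walk_rev hd_rev last_rev)
qed

lemma hop_dist_sym: "hop_dist E y x = hop_dist E x y"
  by (intro antisym hop_dist_sym_le)

lemma hop_dist_mono: "E \<subseteq> E' \<Longrightarrow> hop_dist E' x y \<le> hop_dist E x y"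
  unfolding hop_dist_def by (rule Inf_superset_mono) (auto intro: walk_mono)

lemma hop_dist_attained:
  assumes "hop_dist E x y \<noteq> \<infinity>"
  obtains xs where "walk E xs" "hd xs = x" "last xs = y" "hop_dist E x y = real (length xs - 1)"
proof -
  define P where "P n \<longleftrightarrow> (\<exists>xs. walk E xs \<and> hd xs = x \<and> last xs = y \<and> length xs - 1 = n)" for n
  obtain n where "P n"
    using assms by (auto simp: P_def hop_dist_def top_ereal_def[symmetric])
  then have "P (LEAST n. P n)"
    by (rule LeastI)
  then obtain xs where xs: "walk E xs" "hd xs = x" "last xs = y" "length xs - 1 = (LEAST n. P n)"
    unfolding P_def by blast
  have "ereal (real (length xs - 1)) \<le> hop_dist E x y"
    unfolding hop_dist_def
  proof (rule Inf_greatest, clarify)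
    fix ys assume "walk E ys" "x = hd ys" "y = last ys"
    then have "(LEAST n. P n) \<le> length ys - 1"
      by (intro Least_le) (auto simp: P_def)
    then show "ereal (real (length xs - 1)) \<le> ereal (real (length ys - 1))"
      using xs(4) by simp
  qed
  with hop_dist_le_walk[OF xs(1-3)] show ?thesis
    using that xs by (simp add: antisym)
qed

lemma walk_potential_bound:
  assumes "walk E xs" and step: "\<And>p q. {p, q} \<in> E \<Longrightarrow> h q \<le> h p + (1 :: ereal)"
  shows "h (last xs) \<le> h (hd xs) + real (length xs - 1)"
  using assms(1)
proof (induction xs)
  case (Cons x xs)
  show ?case
  proof (cases "xs = []")
    case False
    with Cons.prems have "{x, hd xs} \<in> E" "walk E xs"
      by (auto simp: walk_Cons)
    then have "h (last xs) \<le> h x + 1 + real (length xs - 1)"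
      using Cons.IH step add_right_mono order_trans by blast
    with False show ?thesis
      by (cases xs) (simp_all add: add.assoc one_ereal_def)
  qed simp
qed (simp add: walk_def)

text \<open>All lower bounds on hop distances below come from potentials that grow by at most one
  along each edge.\<close>

lemma hop_dist_potential_bound:
  assumes "\<And>p q. {p, q} \<in> E \<Longrightarrow> h q \<le> h p + (1 :: ereal)"
  shows "h y \<le> h x + hop_dist E x y"
proof (cases "hop_dist E x y = \<infinity>")
  case False
  then obtain xs where "walk E xs" "hd xs = x" "last xs = y" "hop_dist E x y = real (length xs - 1)"
    by (rule hop_dist_attained)
  moreover have "h (last xs) \<le> h (hd xs) + real (length xs - 1)"
    using \<open>walk E xs\<close> assms by (rule walk_potential_bound)
  ultimately show ?thesis
    by simp
qed simp

lemma hop_dist_step: "{p, q} \<in> E \<Longrightarrow> hop_dist E x q \<le> hop_dist E x p + 1"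
proof (cases "hop_dist E x p = \<infinity>")
  case False
  assume edge: "{p, q} \<in> E"
  obtain xs where xs: "walk E xs" "hd xs = x" "last xs = p" "hop_dist E x p = real (length xs - 1)"
    using False by (rule hop_dist_attained)
  then have "xs \<noteq> []"
    by (simp add: walk_def)
  with xs edge have "hop_dist E x q \<le> real (length (xs @ [q]) - 1)"
    by (intro hop_dist_le_walk) (auto simp: walk_snoc)
  with xs \<open>xs \<noteq> []\<close> show ?thesis
    by (cases xs) (simp_all add: one_ereal_def add.commute)
qed simp

lemma hop_dist_triangle: "hop_dist E x z \<le> hop_dist E x y + hop_dist E y z"
  by (rule hop_dist_potential_bound) (rule hop_dist_step)

lemma hop_dist_insert_edge:
  "min (hop_dist E x y) (min (hop_dist E x a + 1 + hop_dist E b y) (hop_dist E x b + 1 + hop_dist E a y))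
     \<le> hop_dist (insert {a, b} E) x y"
proof -
  let ?d = "hop_dist E"
  define h where "h z = min (?d x z) (min (?d x a + 1 + ?d b z) (?d x b + 1 + ?d a z))" for z
  have plus_one: "min A (min B C) + 1 = min (A + 1) (min (B + 1) (C + 1))" for A B C :: ereal
    using min_of_mono[of "\<lambda>z :: ereal. z + 1"] by (simp add: mono_def add_right_mono)
  have "h q \<le> h p + 1" if "{p, q} \<in> insert {a, b} E" for p q
  proof (cases "{p, q} \<in> E")
    case True
    then have "?d c q \<le> ?d c p + 1" for c
      by (rule hop_dist_step)
    then show ?thesis
      unfolding h_def plus_one by (intro min.mono) (simp_all add: add.assoc add_left_mono)
  next
    case False
    with that have pq: "p = a \<and> q = b \<or> p = b \<and> q = a"
      by (auto simp: doubleton_eq_iff)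
    have "A \<le> A + 1 + ?d c c'" for A c c'
      using hop_dist_nonneg[of E c c'] by (simp add: add.assoc add_increasing2)
    then have "min (?d x p) (?d x q + 1) \<le> h p"
      using pq unfolding h_def by (auto simp: min_le_iff_disj)
    moreover have "h q \<le> min (?d x p + 1) (?d x q)"
      using pq unfolding h_def by (auto simp: min_le_iff_disj)
    moreover have "min (A + 1) B \<le> min A (B + 1) + 1" for A B :: ereal
      by (cases "A \<le> B + 1") (auto simp: min_def add.assoc intro: add_increasing2)
    ultimately show ?thesis
      by (meson add_right_mono order_trans)
  qed
  then have "h y \<le> h x + hop_dist (insert {a, b} E) x y"
    by (rule hop_dist_potential_bound)
  moreover have "h x = 0"
    using hop_dist_nonneg[of E] unfolding h_def
    by (intro antisym) (auto simp: min_le_iff_disj add_nonneg_nonneg)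
  ultimately show ?thesis
    by (simp add: h_def)
qed

section \<open>Dense graphs of large girth\<close>

text \<open>Every cycle through an edge of \<open>H\<close> has more than \<open>t\<close> edges.\<close>

definition girth_gt :: "nat \<Rightarrow> 'a set set \<Rightarrow> bool" where
  "girth_gt t H \<longleftrightarrow> (\<forall>a b. {a, b} \<in> H \<longrightarrow> real t \<le> hop_dist (H - {{a, b}}) a b)"

lemma girth_gt_insert_edge:
  assumes girth: "girth_gt t H" and new: "{a, b} \<notin> H" and far: "real t \<le> hop_dist H a b"
  shows "girth_gt t (insert {a, b} H)"
  unfolding girth_gt_def
proof (intro allI impI)
  fix x y assume xy: "{x, y} \<in> insert {a, b} H"
  show "real t \<le> hop_dist (insert {a, b} H - {{x, y}}) x y"
  proof (cases "{x, y} = {a, b}")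
    case True
    then have "insert {a, b} H - {{x, y}} = H" and "hop_dist H x y = hop_dist H a b"
      using new hop_dist_sym[of H] by (auto simp: doubleton_eq_iff insert_commute)
    with far show ?thesis
      by simp
  next
    case False
    with xy have "{x, y} \<in> H"
      by simp
    let ?d = "hop_dist (H - {{x, y}})"
    have "real t \<le> ?d x c + 1 + ?d c' y" if "real t \<le> hop_dist H c c'" for c c'
    proof -
      have "hop_dist H c c' \<le> hop_dist H c x + (hop_dist H x y + hop_dist H y c')"
        by (meson add_left_mono hop_dist_triangle order_trans)
      also have "\<dots> \<le> ?d x c + (1 + ?d c' y)"
        using hop_dist_edge[OF \<open>{x, y} \<in> H\<close>] hop_dist_mono[of "H - {{x, y}}" H]
        by (intro add_mono) (auto simp: hop_dist_sym[of H c] hop_dist_sym[of H y])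
      finally show ?thesis
        using that by (simp add: add.assoc)
    qed
    then have "real t \<le> min (?d x y) (min (?d x a + 1 + ?d b y) (?d x b + 1 + ?d a y))"
      using girth \<open>{x, y} \<in> H\<close> far hop_dist_sym[of H a b] by (simp add: girth_gt_def)
    also have "\<dots> \<le> hop_dist (insert {a, b} (H - {{x, y}})) x y"
      by (rule hop_dist_insert_edge)
    finally show ?thesis
      using False by (simp add: insert_Diff_if)
  qed
qed


lemma graph_on_edgeD: "graph_on V H \<Longrightarrow> {z, w} \<in> H \<Longrightarrow> z \<in> V \<and> w \<in> V \<and> z \<noteq> w"
  unfolding graph_on_def by (fastforce simp: doubleton_eq_iff)

lemma graph_on_subset_Pow: "graph_on V H \<Longrightarrow> H \<subseteq> Pow V"
  unfolding graph_on_def by auto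

lemma graph_on_mono: "graph_on V H \<Longrightarrow> G \<subseteq> H \<Longrightarrow> graph_on V G"
  unfolding graph_on_def by (meson subsetD)

lemma graph_on_insert:
  "graph_on V H \<Longrightarrow> a \<in> V \<Longrightarrow> b \<in> V \<Longrightarrow> a \<noteq> b \<Longrightarrow> graph_on V (insert {a, b} H)"
  unfolding graph_on_def by auto

definition neighbours :: "'a set set \<Rightarrow> 'a \<Rightarrow> 'a set" where
  "neighbours E z = {w. {z, w} \<in> E}"

lemma neighbours_subset: "graph_on V H \<Longrightarrow> neighbours H z \<subseteq> V"
  by (auto simp: neighbours_def dest: graph_on_edgeD)

lemma neighbours_insert:
  "neighbours (insert {a, b} E) z
     = neighbours E z \<union> (if z = a then {b} else {}) \<union> (if z = b then {a} else {})"
  by (auto simp: neighbours_def doubleton_eq_iff)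

primrec reach :: "'a set set \<Rightarrow> 'a \<Rightarrow> nat \<Rightarrow> 'a set" where
  "reach E a 0 = {a}"
| "reach E a (Suc i) = reach E a i \<union> (\<Union>z\<in>reach E a i. neighbours E z)"

lemma reach_mono: "i \<le> j \<Longrightarrow> reach E a i \<subseteq> reach E a j"
  by (rule lift_Suc_mono_le[of "reach E a"]) auto

lemma walk_last_in_reach: "walk E xs \<Longrightarrow> last xs \<in> reach E (hd xs) (length xs - 1)"
proof (induction xs rule: rev_induct)
  case (snoc z xs)
  show ?case
  proof (cases "xs = []")
    case False
    with snoc have "last xs \<in> reach E (hd xs) (length xs - 1)" "{last xs, z} \<in> E"
      by (auto simp: walk_snoc)
    then have "z \<in> reach E (hd xs) (Suc (length xs - 1))"
      unfolding reach.simps neighbours_def by blast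
    with False show ?thesis
      by simp
  qed simp
qed (simp add: walk_def)

lemma reach_if_hop_dist_less:
  assumes "hop_dist E a b < real n"
  shows "b \<in> reach E a (n - 1)"
proof -
  from assms have "hop_dist E a b \<noteq> \<infinity>"
    by auto
  then obtain xs where xs: "walk E xs" "hd xs = a" "last xs = b"
    and len: "hop_dist E a b = real (length xs - 1)"
    by (rule hop_dist_attained)
  from assms len have "length xs - 1 \<le> n - 1"
    by simp
  moreover have "b \<in> reach E a (length xs - 1)"
    using walk_last_in_reach[OF xs(1)] xs(2,3) by simp
  ultimately show ?thesis
    by (meson reach_mono subsetD)
qed

lemma card_reach_le:
  assumes "\<And>z. finite (neighbours E z)" and "\<And>z. card (neighbours E z) \<le> D"
  shows "finite (reach E a i) \<and> card (reach E a i) \<le> (D + 1) ^ i"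
proof (induction i)
  case (Suc i)
  let ?R = "reach E a i"
  have "card (\<Union>z\<in>?R. neighbours E z) \<le> (\<Sum>z\<in>?R. card (neighbours E z))"
    using Suc assms by (intro card_UN_le) auto
  also have "\<dots> \<le> card ?R * D"
    using sum_mono[of ?R "\<lambda>z. card (neighbours E z)" "\<lambda>_. D"] assms by simp
  finally have "card (reach E a (Suc i)) \<le> card ?R * (D + 1)"
    using card_Un_le[of ?R "\<Union>z\<in>?R. neighbours E z"] by simp
  also have "\<dots> \<le> (D + 1) ^ i * (D + 1)"
    using Suc by (intro mult_right_mono) auto
  also have "\<dots> = (D + 1) ^ Suc i"
    using Suc by (simp add: mult.commute)
  finally show ?case
    using Suc assms by simp
qed simp

lemma card_pairwise_close_le:
  assumes "\<And>z. finite (neighbours E z)" and "\<And>z. card (neighbours E z) \<le> D"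
    and close: "\<And>a b. a \<in> U \<Longrightarrow> b \<in> U \<Longrightarrow> hop_dist E a b < real t"
  shows "card U \<le> (D + 1) ^ (t - 1)"
proof (cases "U = {}")
  case False
  then obtain a where "a \<in> U"
    by blast
  with close have "U \<subseteq> reach E a (t - 1)"
    by (blast intro: reach_if_hop_dist_less)
  with card_reach_le[OF assms(1,2)] show ?thesis
    by (meson card_mono le_trans)
qed simp

lemma card_adjacent_pairs_le:
  fixes H :: "'a :: linorder set set"
  assumes "finite H"
  shows "card {(z, w). {z, w} \<in> H} \<le> 2 * card H"
proof -
  let ?P = "{(z, w). {z, w} \<in> H}" and ?g = "\<lambda>(z :: 'a, w). ({z, w}, z < w)"
  have "inj_on ?g ?P"
  proof (rule inj_onI, clarify)
    fix z w z' w' :: 'a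
    assume "{z, w} = {z', w'}" "(z < w) = (z' < w')"
    then show "z = z' \<and> w = w'"
      by (metis doubleton_eq_iff not_less_iff_gr_or_eq)
  qed
  then have "card ?P = card (?g ` ?P)"
    by (simp add: card_image)
  also have "\<dots> \<le> card (H \<times> (UNIV :: bool set))"
    using assms by (intro card_mono) auto
  finally show ?thesis
    by (simp add: card_cartesian_product)
qed

lemma card_mult_min_degree_le:
  fixes H :: "'a :: linorder set set"
  assumes graph: "graph_on V H" and "finite V" and "S \<subseteq> V"
    and degree: "\<And>z. z \<in> S \<Longrightarrow> D \<le> card (neighbours H z)"
  shows "card S * D \<le> 2 * card H"
proof -
  have pairs: "{(z, w). {z, w} \<in> H} \<subseteq> V \<times> V"
    using graph_on_edgeD[OF graph] by blast
  have fin: "finite S" "\<And>z. finite (neighbours H z)" "finite {(z, w). {z, w} \<in> H}"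
    using assms neighbours_subset[OF graph] finite_subset[OF pairs] by (meson finite_subset finite_SigmaI)+
  have "card S * D \<le> (\<Sum>z\<in>S. card (neighbours H z))"
    using sum_mono[of S "\<lambda>_. D"] degree by simp
  also have "\<dots> = card (Sigma S (neighbours H))"
    using fin by (simp add: card_SigmaI)
  also have "\<dots> \<le> card {(z, w). {z, w} \<in> H}"
    using fin by (intro card_mono) (auto simp: neighbours_def)
  also have "\<dots> \<le> 2 * card H"
    using graph_on_subset_Pow[OF graph] \<open>finite V\<close>
    by (intro card_adjacent_pairs_le) (auto intro: finite_subset)
  finally show ?thesis .
qed



lemma low_degree_vertices_close:
  assumes graph: "graph_on V H" and "finite H" and girth: "girth_gt t H" and "t \<ge> 2"
    and degree: "\<And>z. card (neighbours H z) \<le> D" and "\<And>z. finite (neighbours H z)"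
    and maximal: "\<And>H'. graph_on V H' \<Longrightarrow> girth_gt t H' \<Longrightarrow> \<forall>z. card (neighbours H' z) \<le> D \<Longrightarrow>
      card H' \<le> card H"
    and a: "a \<in> V" "card (neighbours H a) < D" and b: "b \<in> V" "card (neighbours H b) < D"
  shows "hop_dist H a b < real t"
proof (rule ccontr)
  assume "\<not> ?thesis"
  then have far: "real t \<le> hop_dist H a b"
    by simp
  moreover have "1 < ereal (real t)"
    using \<open>t \<ge> 2\<close> by simp
  ultimately have "1 < hop_dist H a b"
    by (rule order.strict_trans2[rotated])
  then have "{a, b} \<notin> H" "a \<noteq> b"
    using hop_dist_edge[of a b H] by auto
  let ?H = "insert {a, b} H"
  have "card (neighbours ?H z) \<le> D" for z
  proof (cases "z = a \<or> z = b")
    case True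
    with \<open>a \<noteq> b\<close> assms(6) have "card (neighbours ?H z) \<le> Suc (card (neighbours H z))"
      by (auto simp: neighbours_insert card_insert_if)
    with True a b show ?thesis
      by auto
  qed (simp add: neighbours_insert degree)
  moreover have "graph_on V ?H"
    using graph a b \<open>a \<noteq> b\<close> by (simp add: graph_on_insert)
  ultimately have "card ?H \<le> card H"
    using girth_gt_insert_edge[OF girth \<open>{a, b} \<notin> H\<close> far] by (intro maximal) auto
  with \<open>finite H\<close> \<open>{a, b} \<notin> H\<close> show False
    by simp
qed

lemma exists_girth_gt_graph:
  fixes V :: "'a :: linorder set"
  assumes "finite V" and "t \<ge> 2"
  obtains H where "graph_on V H" "girth_gt t H" "D * (card V - (D + 1) ^ (t - 1)) \<le> 2 * card H"
proof -
  define C where "C = {H. graph_on V H \<and> girth_gt t H \<and> (\<forall>z. card (neighbours H z) \<le> D)}"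
  have "C \<subseteq> Pow (Pow V)"
    unfolding C_def using graph_on_subset_Pow by blast
  then have "finite C"
    using \<open>finite V\<close> by (meson finite_Pow_iff finite_subset)
  moreover have "{} \<in> C"
    by (simp add: C_def graph_on_def girth_gt_def neighbours_def)
  ultimately have "Max (card ` C) \<in> card ` C"
    by (intro Max_in) auto
  then obtain H where "H \<in> C" and "card H = Max (card ` C)"
    by auto
  with \<open>finite C\<close> have maximal: "card H' \<le> card H" if "H' \<in> C" for H'
    using that by simp
  from \<open>H \<in> C\<close> have graph: "graph_on V H" and girth: "girth_gt t H"
    and degree: "\<And>z. card (neighbours H z) \<le> D"
    by (auto simp: C_def)
  have fin: "finite H" "\<And>z. finite (neighbours H z)"
    using \<open>finite V\<close> graph_on_subset_Pow[OF graph] neighbours_subset[OF graph]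
    by (meson finite_Pow_iff finite_subset)+
  define U where "U = {z \<in> V. card (neighbours H z) < D}"
  have "card U \<le> (D + 1) ^ (t - 1)"
    using low_degree_vertices_close[OF graph fin(1) girth \<open>t \<ge> 2\<close> degree fin(2)] maximal
    by (intro card_pairwise_close_le[OF fin(2) degree]) (auto simp: U_def C_def)
  moreover have "card (V - U) = card V - card U"
    using \<open>finite V\<close> by (intro card_Diff_subset) (auto simp: U_def intro: finite_subset)
  ultimately have "card V - (D + 1) ^ (t - 1) \<le> card (V - U)"
    by simp
  then have "(card V - (D + 1) ^ (t - 1)) * D \<le> card (V - U) * D"
    by (rule mult_le_mono1)
  also have "\<dots> \<le> 2 * card H"
    by (rule card_mult_min_degree_le[OF graph \<open>finite V\<close>]) (auto simp: U_def)
  finally show thesis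
    using graph girth that by (simp add: mult.commute)
qed

section \<open>Subdivided graphs\<close>

text \<open>An edge \<open>{u, v}\<close> with \<open>u < v < k\<close> is replaced by a path through the vertex
  \<open>k + u * k + v\<close>; these vertices are distinct and lie in \<open>{k..<k + k * k}\<close>.\<close>

definition subdivision_vertex :: "nat \<Rightarrow> nat \<Rightarrow> nat \<Rightarrow> nat" where
  "subdivision_vertex k u v = k + u * k + v"

definition subdivide :: "nat \<Rightarrow> nat set set \<Rightarrow> nat set set" where
  "subdivide k G =
     {{u, subdivision_vertex k u v} | u v. {u, v} \<in> G \<and> u < v} \<union>
     {{subdivision_vertex k u v, v} | u v. {u, v} \<in> G \<and> u < v}"

lemma subdivision_vertex_decode:
  assumes "v < k"
  shows "\<not> subdivision_vertex k u v < k" "(subdivision_vertex k u v - k) div k = u"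
    "(subdivision_vertex k u v - k) mod k = v"
  using assms by (auto simp: subdivision_vertex_def)

lemma subdivision_vertex_less:
  assumes "u < k" "v < k"
  shows "subdivision_vertex k u v < k + k * k"
proof -
  have "u * k + k \<le> k * k"
    using mult_le_mono1[of "Suc u" k k] assms by simp
  with assms show ?thesis
    by (simp add: subdivision_vertex_def)
qed

lemma graph_on_subdivide:
  assumes "graph_on {0..<k} G"
  shows "graph_on {0..<k + k * k} (subdivide k G)"
  unfolding graph_on_def
proof
  fix e assume "e \<in> subdivide k G"
  then obtain u v where uv: "{u, v} \<in> G" "u < v"
    and e: "e = {u, subdivision_vertex k u v} \<or> e = {subdivision_vertex k u v, v}"
    unfolding subdivide_def by blast
  from graph_on_edgeD[OF assms uv(1)] have "u < k" "v < k"
    by auto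
  then have "u \<in> {0..<k + k * k}" "v \<in> {0..<k + k * k}"
    "subdivision_vertex k u v \<in> {0..<k + k * k}"
    "u \<noteq> subdivision_vertex k u v" "subdivision_vertex k u v \<noteq> v"
    using subdivision_vertex_less[of u k v] subdivision_vertex_decode(1)[of v k u] by auto
  with e show "\<exists>x y. e = {x, y} \<and> x \<noteq> y \<and> x \<in> {0..<k + k * k} \<and> y \<in> {0..<k + k * k}"
    by blast
qed

lemma card_subdivide_le:
  assumes "graph_on {0..<k} G"
  shows "card (subdivide k G) \<le> 2 * (k * k)"
proof -
  define Q where "Q = {(u, v). {u, v} \<in> G \<and> u < v}"
  have "Q \<subseteq> {0..<k} \<times> {0..<k}"
    unfolding Q_def using graph_on_edgeD[OF assms] by auto
  then have "finite Q" "card Q \<le> k * k"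
    using card_mono[of "{0..<k} \<times> {0..<k}" Q] by (auto intro: finite_subset)
  have "subdivide k G
      = (\<lambda>(u, v). {u, subdivision_vertex k u v}) ` Q \<union> (\<lambda>(u, v). {subdivision_vertex k u v, v}) ` Q"
    unfolding subdivide_def Q_def by auto
  then have "card (subdivide k G) \<le> card Q + card Q"
    using card_Un_le card_image_le[OF \<open>finite Q\<close>] by (metis (no_types, lifting) add_mono le_trans)
  with \<open>card Q \<le> k * k\<close> show ?thesis
    by simp
qed

lemma subdivided_subgraph_sparse:
  assumes "graph_on {0..<k} H" and "G \<in> subdivide k ` Pow H"
  shows "graph_on {0..<k + k * k} G \<and> real (card G) \<le> 2 * real (card {0..<k + k * k})"
proof -
  from assms obtain G0 where "graph_on {0..<k} G0" "G = subdivide k G0"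
    using graph_on_mono by blast
  then have "graph_on {0..<k + k * k} G" "card G \<le> 2 * (k * k)"
    by (simp_all add: graph_on_subdivide card_subdivide_le)
  moreover have "2 * (k * k) \<le> 2 * card {0..<k + k * k}"
    by simp
  ultimately show ?thesis
    using of_nat_mono[of "card G" "2 * card {0..<k + k * k}", where 'a = real] by simp
qed

lemma hop_dist_subdivide_edge:
  assumes "{u, v} \<in> G" "u \<noteq> v"
  shows "hop_dist (subdivide k G) u v \<le> 2"
proof -
  obtain s where "{u, s} \<in> subdivide k G" "{s, v} \<in> subdivide k G"
  proof (cases "u < v")
    case True
    with assms that show ?thesis
      unfolding subdivide_def by blast
  next
    case False
    with assms have "{v, u} \<in> G" "v < u"
      by (simp_all add: insert_commute)
    with that show ?thesis
      unfolding subdivide_def by (blast intro: insert_commute)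
  qed
  then have "walk (subdivide k G) [u, s, v]"
    by (simp add: walk_def nth_Cons split: nat.split)
  from hop_dist_le_walk[OF this] show ?thesis
    by (simp add: numeral_eq_ereal)
qed

lemma hop_dist_subdivide_ge:
  assumes graph: "graph_on {0..<k} G" and "u < k" "y < k"
  shows "2 * hop_dist G u y \<le> hop_dist (subdivide k G) u y"
proof -
  let ?d = "hop_dist G u"
  define h where "h z = (if z < k then 2 * ?d z
      else 2 * min (?d ((z - k) div k)) (?d ((z - k) mod k)) + 1)" for z
  have "h q \<le> h p + 1" if "{p, q} \<in> subdivide k G" for p q
  proof -
    from that obtain a b where ab: "{a, b} \<in> G" "a < b"
      and pq: "{p, q} = {a, subdivision_vertex k a b} \<or> {p, q} = {subdivision_vertex k a b, b}"
      unfolding subdivide_def by blast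
    from graph_on_edgeD[OF graph ab(1)] have "a < k" "b < k"
      by auto
    let ?m = "min (?d a) (?d b)"
    have h: "h (subdivision_vertex k a b) = 2 * ?m + 1" "h a = 2 * ?d a" "h b = 2 * ?d b"
      using subdivision_vertex_decode[OF \<open>b < k\<close>, of a] \<open>a < k\<close> \<open>b < k\<close> by (simp_all add: h_def)
    have "?d a \<le> ?d b + 1" "?d b \<le> ?d a + 1"
      using hop_dist_step[of a b G u] hop_dist_step[of b a G u] ab(1) by (simp_all add: insert_commute)
    then have "?m \<le> ?d c \<and> ?d c \<le> ?m + 1" if "c = a \<or> c = b" for c
      using that by (auto simp: min_def)
    moreover have "2 * m + 1 \<le> 2 * x + 1 \<and> 2 * x \<le> 2 * m + 1 + 1"
      if "m \<le> x" "x \<le> m + 1" for m x :: ereal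
      using that by (cases m; cases x) auto
    ultimately show ?thesis
      using pq h by (auto simp: doubleton_eq_iff)
  qed
  then have "h y \<le> h u + hop_dist (subdivide k G) u y"
    by (rule hop_dist_potential_bound)
  with \<open>u < k\<close> \<open>y < k\<close> show ?thesis
    by (simp add: h_def)
qed

section \<open>Distance oracles\<close>

definition multiplicative_distance_oracle ::
    "real \<Rightarrow> 'a set \<Rightarrow> 'a set set set \<Rightarrow> ('a set set \<Rightarrow> bool list) \<Rightarrow> (bool list \<Rightarrow> 'a \<Rightarrow> 'a \<Rightarrow> ereal) \<Rightarrow> bool"
  where "multiplicative_distance_oracle \<alpha> K \<G> f dec \<longleftrightarrow>
    (\<forall>G\<in>\<G>. \<forall>x\<in>K. \<forall>x'\<in>K. hop_dist G x x' \<le> dec (f G) x x' \<and> dec (f G) x x' \<le> ereal \<alpha> * hop_dist G x x')"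

definition additive_distance_oracle ::
    "real \<Rightarrow> 'a set \<Rightarrow> 'a set set set \<Rightarrow> ('a set set \<Rightarrow> bool list) \<Rightarrow> (bool list \<Rightarrow> 'a \<Rightarrow> 'a \<Rightarrow> ereal) \<Rightarrow> bool"
  where "additive_distance_oracle \<beta> K \<G> f dec \<longleftrightarrow>
    (\<forall>G\<in>\<G>. \<forall>x\<in>K. \<forall>x'\<in>K. hop_dist G x x' \<le> dec (f G) x x' \<and> dec (f G) x x' \<le> hop_dist G x x' + ereal \<beta>)"

lemma distance_oracle_bounds:
  assumes "multiplicative_distance_oracle \<alpha> K \<G> f dec \<or> additive_distance_oracle \<beta> K \<G> f dec"
    and "G \<in> \<G>" "x \<in> K" "x' \<in> K"
  shows "hop_dist G x x' \<le> dec (f G) x x'"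
    and "dec (f G) x x' \<le> ereal \<alpha> * hop_dist G x x' \<or> dec (f G) x x' \<le> hop_dist G x x' + ereal \<beta>"
  using assms unfolding multiplicative_distance_oracle_def additive_distance_oracle_def by auto

lemma estimate_of_short_distance_less:
  fixes d \<delta> :: ereal and t \<epsilon> :: real
  assumes "0 \<le> d" "d \<le> 2" "t > 0" "\<epsilon> > 0"
    and "\<delta> \<le> ereal (t - \<epsilon>) * d \<or> \<delta> \<le> d + ereal (2 * t - 3)"
  shows "\<delta> < ereal (2 * t)"
proof -
  obtain r where r: "d = ereal r" "0 \<le> r" "r \<le> 2"
    using assms(1,2) by (cases d) auto
  have "(t - \<epsilon>) * r < 2 * t"
  proof (cases "r = 0")
    case False
    with r \<open>\<epsilon> > 0\<close> have "\<epsilon> * r > 0"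
      by simp
    moreover have "t * r \<le> t * 2"
      using r \<open>t > 0\<close> by (intro mult_left_mono) auto
    ultimately show ?thesis
      by (simp add: algebra_simps)
  qed (use \<open>t > 0\<close> in simp)
  moreover have "r + (2 * t - 3) < 2 * t"
    using r by simp
  ultimately show ?thesis
    using assms(5) r(1) by (auto intro: le_less_trans)
qed

lemma distance_oracle_separates_subgraphs:
  assumes graph: "graph_on {0..<k} H" and girth: "girth_gt t H" and "t \<ge> 1" "\<epsilon> > 0"
    and estimates: "multiplicative_distance_oracle (real t - \<epsilon>) {0..<k} (subdivide k ` Pow H) f dec \<or>
      additive_distance_oracle (2 * real t - 3) {0..<k} (subdivide k ` Pow H) f dec"
    and "G \<subseteq> H" "G' \<subseteq> H" "e \<in> G' - G"
  shows "f (subdivide k G) \<noteq> f (subdivide k G')"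
proof
  assume same_code: "f (subdivide k G) = f (subdivide k G')"
  from \<open>e \<in> G' - G\<close> \<open>G' \<subseteq> H\<close> have "e \<in> H"
    by blast
  with graph obtain u v where e: "e = {u, v}"
    unfolding graph_on_def by blast
  with graph_on_edgeD[OF graph] \<open>e \<in> H\<close> have uv: "u \<in> {0..<k}" "v \<in> {0..<k}" "u \<noteq> v"
    by auto
  let ?\<delta> = "dec (f (subdivide k G')) u v"
  have "real t \<le> hop_dist (H - {e}) u v"
    using girth \<open>e \<in> H\<close> e by (simp add: girth_gt_def)
  also have "\<dots> \<le> hop_dist G u v"
    using \<open>G \<subseteq> H\<close> \<open>e \<in> G' - G\<close> by (intro hop_dist_mono) blast
  finally have "2 * ereal (real t) \<le> 2 * hop_dist G u v"
    by (rule ereal_mult_left_mono) simp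
  also have "\<dots> \<le> hop_dist (subdivide k G) u v"
    using uv graph_on_mono[OF graph \<open>G \<subseteq> H\<close>] by (intro hop_dist_subdivide_ge) auto
  also have "\<dots> \<le> ?\<delta>"
    using distance_oracle_bounds(1)[OF estimates imageI[OF PowI[OF \<open>G \<subseteq> H\<close>]] uv(1,2)] same_code
    by simp
  finally have "ereal (2 * real t) \<le> ?\<delta>"
    by simp
  moreover have "?\<delta> < ereal (2 * real t)"
  proof (rule estimate_of_short_distance_less)
    show "hop_dist (subdivide k G') u v \<le> 2"
      using \<open>e \<in> G' - G\<close> e uv by (intro hop_dist_subdivide_edge) auto
  qed (use \<open>t \<ge> 1\<close> \<open>\<epsilon> > 0\<close> hop_dist_nonneg
      distance_oracle_bounds(2)[OF estimates imageI[OF PowI[OF \<open>G' \<subseteq> H\<close>]] uv(1,2)] in auto)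
  ultimately show False
    by simp
qed

lemma distance_oracle_inj_on_subgraphs:
  assumes graph: "graph_on {0..<k} H" and girth: "girth_gt t H" and "t \<ge> 1" "\<epsilon> > 0"
    and estimates: "multiplicative_distance_oracle (real t - \<epsilon>) {0..<k} (subdivide k ` Pow H) f dec \<or>
      additive_distance_oracle (2 * real t - 3) {0..<k} (subdivide k ` Pow H) f dec"
  shows "inj_on (\<lambda>G. f (subdivide k G)) (Pow H)"
proof (rule inj_onI, rule ccontr)
  fix G G' assume "G \<in> Pow H" "G' \<in> Pow H" "f (subdivide k G) = f (subdivide k G')" "G \<noteq> G'"
  moreover from \<open>G \<noteq> G'\<close> obtain e where "e \<in> G' - G \<or> e \<in> G - G'"
    by blast
  ultimately show False
    using distance_oracle_separates_subgraphs[OF assms] by (metis PowD)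
qed

lemma card_bool_lists_shorter: "card {xs :: bool list. length xs < n} < 2 ^ n"
proof (induction n)
  case (Suc n)
  have "{xs :: bool list. length xs < Suc n} = {xs. length xs < n} \<union> {xs. set xs \<subseteq> UNIV \<and> length xs = n}"
    by auto
  moreover have "card {xs :: bool list. set xs \<subseteq> UNIV \<and> length xs = n} = 2 ^ n"
    using card_lists_length_eq[of "UNIV :: bool set" n] by simp
  ultimately have "card {xs :: bool list. length xs < Suc n} \<le> card {xs :: bool list. length xs < n} + 2 ^ n"
    by (metis card_Un_le)
  with Suc show ?case
    by simp
qed simp

lemma exists_long_code:
  fixes f :: "'a \<Rightarrow> bool list"
  assumes "inj_on f A" and "2 ^ n \<le> card A"
  shows "\<exists>x\<in>A. n \<le> length (f x)"
proof (rule ccontr)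
  assume "\<not> ?thesis"
  then have "f ` A \<subseteq> {xs. length xs < n}"
    by auto
  moreover have "finite {xs :: bool list. length xs < n}"
    by (rule finite_subset[of _ "{xs. set xs \<subseteq> UNIV \<and> length xs \<le> n}"])
      (use finite_lists_length_le[of "UNIV :: bool set" n] in auto)
  ultimately have "card (f ` A) \<le> card {xs :: bool list. length xs < n}"
    by (simp add: card_mono)
  with card_bool_lists_shorter[of n] assms show False
    by (simp add: card_image)
qed

lemma distance_oracle_code_length:
  assumes "graph_on {0..<k} H" "girth_gt t H" "t \<ge> 1" "\<epsilon> > 0"
    and "multiplicative_distance_oracle (real t - \<epsilon>) {0..<k} (subdivide k ` Pow H) f dec \<or>
      additive_distance_oracle (2 * real t - 3) {0..<k} (subdivide k ` Pow H) f dec"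
  shows "\<exists>G\<in>subdivide k ` Pow H. card H \<le> length (f G)"
proof -
  have "finite H"
    using graph_on_subset_Pow[OF assms(1)] by (meson finite_Pow_iff finite_atLeastLessThan finite_subset)
  then have "2 ^ card H \<le> card (Pow H)"
    by (simp add: card_Pow)
  with distance_oracle_inj_on_subgraphs[OF assms] obtain G
    where "G \<in> Pow H" "card H \<le> length (f (subdivide k G))"
    using exists_long_code by blast
  then show ?thesis
    by blast
qed

lemma doubled_power_powr_bound:
  assumes "t \<ge> 2" and "D \<ge> 1"
  shows "real (2 * (D + 1) ^ (t - 1)) powr (1 + 1 / (real t - 1)) \<le> 8 * real (D * (D + 1) ^ (t - 1))"
proof -
  define x n where "x = real (D + 1)" and "n = t - 1"
  have n: "real t - 1 = real n" "n \<ge> 1" and x: "x \<ge> 2"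
    using assms by (auto simp: x_def n_def)
  have root: "(x ^ n) powr (1 / real n) = x"
    using n(2) x by (simp add: powr_realpow[symmetric] powr_powr)
  have "2 powr (1 / real n) \<le> 2 powr 1"
    using n(2) by (intro powr_mono) auto
  then have "(2 * x ^ n) powr (1 / real n) \<le> 2 * x"
    using x by (simp add: powr_mult root)
  then have "(2 * x ^ n) powr (1 + 1 / real n) \<le> (2 * x ^ n) * (2 * x)"
    using x by (simp add: powr_add mult_left_mono)
  also have "\<dots> = 4 * x * x ^ n"
    by simp
  also have "\<dots> \<le> 4 * (2 * real D) * x ^ n"
    using assms(2) x by (intro mult_right_mono) (auto simp: x_def)
  finally show ?thesis
    unfolding n(1) by (simp add: x_def n_def)
qed

definition hard_graph_family ::
    "nat \<Rightarrow> real \<Rightarrow> real \<Rightarrow> real \<Rightarrow> nat \<Rightarrow> 'a set \<Rightarrow> 'a set \<Rightarrow> 'a set set set \<Rightarrow> bool"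
  where "hard_graph_family t \<epsilon> C c k V K \<G> \<longleftrightarrow>
    (\<forall>G\<in>\<G>. graph_on V G \<and> real (card G) \<le> C * real (card V)) \<and>
    (\<forall>f dec. multiplicative_distance_oracle (real t - \<epsilon>) K \<G> f dec \<or>
        additive_distance_oracle (2 * real t - 3) K \<G> f dec
      \<longrightarrow> (\<exists>G\<in>\<G>. real (length (f G)) \<ge> c * real k powr (1 + 1 / (real t - 1))))"

lemma exists_hard_graph_family:
  assumes "t \<ge> 2" and "\<epsilon> > 0" and "D \<ge> 1" and k: "k = 2 * (D + 1) ^ (t - 1)"
  shows "\<exists>\<G>. hard_graph_family t \<epsilon> 2 (1 / 16) k {0..<k + k * k} {0..<k} \<G>"
proof -
  obtain H where graph: "graph_on {0..<k} H" and girth: "girth_gt t H"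
    and many_edges: "D * (card {0..<k} - (D + 1) ^ (t - 1)) \<le> 2 * card H"
    using exists_girth_gt_graph[of "{0..<k}" t] \<open>t \<ge> 2\<close> by blast
  have "real k powr (1 + 1 / (real t - 1)) \<le> 8 * real (D * (D + 1) ^ (t - 1))"
    unfolding k using assms by (intro doubled_power_powr_bound)
  also have "\<dots> \<le> 8 * real (2 * card H)"
    using many_edges unfolding k of_nat_le_iff[symmetric, where 'a = real] by simp
  finally have size: "1 / 16 * real k powr (1 + 1 / (real t - 1)) \<le> real (card H)"
    by simp
  have "\<exists>G\<in>subdivide k ` Pow H. real (length (f G)) \<ge> 1 / 16 * real k powr (1 + 1 / (real t - 1))"
    if "multiplicative_distance_oracle (real t - \<epsilon>) {0..<k} (subdivide k ` Pow H) f dec \<or>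
      additive_distance_oracle (2 * real t - 3) {0..<k} (subdivide k ` Pow H) f dec" for f dec
    using distance_oracle_code_length[OF graph girth _ \<open>\<epsilon> > 0\<close> that] \<open>t \<ge> 2\<close> size
    by (force intro: order_trans)
  then show ?thesis
    using subdivided_subgraph_sparse[OF graph] unfolding hard_graph_family_def
    by (intro exI[of _ "subdivide k ` Pow H"] conjI) blast+
qed

lemma infinite_doubled_powers:
  assumes "t \<ge> 2"
  shows "infinite {2 * (D + 1) ^ (t - 1) | D :: nat. D \<ge> 1}"
  unfolding infinite_nat_iff_unbounded
proof
  fix m :: nat
  have "m + 2 \<le> (m + 2) ^ (t - 1)"
    using assms by (intro self_le_power) auto
  then show "\<exists>n > m. n \<in> {2 * (D + 1) ^ (t - 1) | D. D \<ge> 1}"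
    by (intro exI[of _ "2 * (m + 2) ^ (t - 1)"]) (auto intro!: exI[of _ "m + 1"])
qed

lemma linear_le_eventually_mult_quadratic:
  assumes "\<eta> > 0"
  shows "\<exists>k0. \<forall>k \<ge> k0. real k \<le> \<eta> * real (k + k * k)"
proof (intro exI allI impI)
  fix k assume "nat \<lceil>1 / \<eta>\<rceil> \<le> k"
  with assms have "1 \<le> \<eta> * real k"
    by (simp add: field_simps)
  then have "real k \<le> \<eta> * real k * real k"
    using mult_right_mono[of 1 "\<eta> * real k" "real k"] by simp
  also have "\<dots> \<le> \<eta> * real (k + k * k)"
    using assms by (simp add: algebra_simps)
  finally show "real k \<le> \<eta> * real (k + k * k)" .
qed

theorem theorem1p5:
  fixes t :: nat and \<epsilon> :: real
  assumes "t \<ge> 2" and "\<epsilon> > 0"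
  shows "\<exists>C c :: real. C > 0 \<and> c > 0 \<and>
    (\<exists>S :: nat set. infinite S \<and>
      (\<exists>(V :: nat \<Rightarrow> nat set) (K :: nat \<Rightarrow> nat set) (\<G> :: nat \<Rightarrow> nat set set set).
        (\<forall>\<eta> > 0. \<exists>k0. \<forall>k\<in>S. k \<ge> k0 \<longrightarrow> real k \<le> \<eta> * real (card (V k))) \<and>
        (\<forall>k\<in>S.
          finite (V k) \<and> K k \<subseteq> V k \<and> card (K k) = k \<and>
          (\<forall>G\<in>\<G> k. graph_on (V k) G \<and> real (card G) \<le> C * real (card (V k))) \<and>
          (\<forall>(f :: nat set set \<Rightarrow> bool list) (dec :: bool list \<Rightarrow> nat \<Rightarrow> nat \<Rightarrow> ereal).
             ((\<forall>G\<in>\<G> k. \<forall>x\<in>K k. \<forall>x'\<in>K k.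
                 hop_dist G x x' \<le> dec (f G) x x' \<and>
                 dec (f G) x x' \<le> ereal (real t - \<epsilon>) * hop_dist G x x')
              \<or>
              (\<forall>G\<in>\<G> k. \<forall>x\<in>K k. \<forall>x'\<in>K k.
                 hop_dist G x x' \<le> dec (f G) x x' \<and>
                 dec (f G) x x' \<le> hop_dist G x x' + ereal (2 * real t - 3)))
             \<longrightarrow> (\<exists>G\<in>\<G> k. real (length (f G)) \<ge> c * real k powr (1 + 1 / (real t - 1)))))))"
proof -
  define S where "S = {2 * (D + 1) ^ (t - 1) | D :: nat. D \<ge> 1}"
  have "\<forall>k\<in>S. \<exists>\<G>. hard_graph_family t \<epsilon> 2 (1 / 16) k {0..<k + k * k} {0..<k} \<G>"
    using exists_hard_graph_family[OF assms] by (auto simp: S_def)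
  then obtain \<G> where hard: "\<forall>k\<in>S. hard_graph_family t \<epsilon> 2 (1 / 16) k {0..<k + k * k} {0..<k} (\<G> k)"
    by (metis bchoice)
  have "infinite S"
    using infinite_doubled_powers[OF assms(1)] by (simp add: S_def)
  have small: "\<forall>\<eta> > 0. \<exists>k0. \<forall>k\<in>S. k \<ge> k0 \<longrightarrow> real k \<le> \<eta> * real (card {0..<k + k * k})"
    using linear_le_eventually_mult_quadratic by (simp, meson)
  have "\<forall>k\<in>S. finite {0..<k + k * k} \<and> {0..<k} \<subseteq> {0..<k + k * k} \<and> card {0..<k} = k \<and>
      hard_graph_family t \<epsilon> 2 (1 / 16) k {0..<k + k * k} {0..<k} (\<G> k)"
    using hard by auto
  then show ?thesis
    unfolding hard_graph_family_def multiplicative_distance_oracle_def additive_distance_oracle_def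
    by (intro exI[of _ "2 :: real"] exI[of _ "1 / 16 :: real"] conjI exI[of _ S] \<open>infinite S\<close>
        exI[of _ "\<lambda>k. {0..<k + k * k}"] exI[of _ "\<lambda>k. {0..<k}"] exI[of _ \<G>] small) simp_all
qed

end
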